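(* The assignment $\varphi(\ast)=\ast$, $\varphi(1)={\tt M}$, $\varphi(s)(v,w)=(w{\tt l},v{\tt r})$, $\varphi(N)(v)=v{\tt t}$, $\varphi(T_2)(v,w)=(v{\tt t},w{\tt t})$, $\varphi(T_3)(v,w,z)=(v{\tt t},w{\tt t},z{\tt t})$, and $\varphi(\rho)=\langle\varphi({\tt s}_2\rho),\varphi({\tt t}_2\rho)\rangle$ for each $3$-generator $\rho\in R_3$, extends in a unique way to a $3$-functor $\varphi:\mathbf{Toff}\to\mathbf{Move}$.
   Context: $\mathbf{Toff}$ is the free strict $3$-category generated by: one $0$-cell $\ast$; one $1$-generator, the wire $1:\ast\to\ast$; four $2$-generators $s:2\Rightarrow2$ (SWAP), $N:1\Rightarrow1$ (NOT), $T_2:2\Rightarrow2$, $T_3:3\Rightarrow3$; and the set $R_3$ of $3$-generators listed below. Write $\star_0$ for parallel composition (left to right), $\star_1$ for sequential composition (diagrammatic order), $1$ also for the identity $2$-cell on one wire and $\mathrm{id}_n$ for the identity $2$-cell on $n$ wires. Let $L_3=(s\star_01)\star_1(1\star_0s)$, $L_4=(s\star_01\star_01)\star_1(1\star_0s\star_01)\star_1(1\star_01\star_0s)$, $L'_3=(1\star_0s)\star_1(s\star_01)$, $L'_4=(1\star_01\star_0s)\star_1(1\star_0s\star_01)\star_1(s\star_01\star_01)$. $R_3$ consists of: $s\star_1s\Rrightarrow\mathrm{id}_2$; $(s\star_01)\star_1(1\star_0s)\star_1(s\star_01)\Rrightarrow(1\star_0s)\star_1(s\star_01)\star_1(1\star_0s)$;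 $N\star_1N\Rrightarrow\mathrm{id}_1$; $T_2\star_1T_2\Rrightarrow\mathrm{id}_2$; $T_3\star_1T_3\Rrightarrow\mathrm{id}_3$; $s\star_1(N\star_01)\Rrightarrow(1\star_0N)\star_1s$; $s\star_1(1\star_0N)\Rrightarrow(N\star_01)\star_1s$; $L_3\star_1(T_2\star_01)\Rrightarrow(1\star_0T_2)\star_1L_3$; $L'_3\star_1(1\star_0T_2)\Rrightarrow(T_2\star_01)\star_1L'_3$; $L_4\star_1(T_3\star_01)\Rrightarrow(1\star_0T_3)\star_1L_4$; $L'_4\star_1(1\star_0T_3)\Rrightarrow(T_3\star_01)\star_1L'_4$; $(s\star_01)\star_1T_3\Rrightarrow T_3\star_1(s\star_01)$. Cells are taken modulo the strict $3$-category axioms. $\mathbf{Move}$: ${\tt M}$ is the free monoid on letters ${\tt l},{\tt r},{\tt t}$ (words written left to right, concatenation $v{\tt t}$ appends ${\tt t}$), ordered by $<_{\tt M}$: first by length, then lexicographically with ${\tt t}<{\tt r}<{\tt l}$; ${\tt M}^n$ carries the product order ($\vec x<_{{\tt M}^n}\vec y$ iff componentwise $\le_{\tt M}$ and $\vec x\ne\vec y$). $\mathbf{Move}$ has one $0$-cell $\ast$, $1$-cells ${\tt M}^n$ (${\tt M}^n\star_0{\tt M}^m={\tt M}^{n+m}$), $2$-cells the strictly monotone maps ${\tt M}^n\to{\tt M}^n$ ($\star_0$ = cartesian product, $\star_1$ = composition of maps), and $3$-cells the pairs $\langle f,g\rangle$ with $f\ge_2 g$, where $f<_2g$ iff $f(\vec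 x)<_{{\tt M}^n}g(\vec x)$ for all $\vec x$, and $f\le_2 g$ iff $f=g$ or $f<_2 g$; compositions $\langle f,g\rangle\star_0\langle f',g'\rangle=\langle f\times f',g\times g'\rangle$, $\langle f,g\rangle\star_1\langle f',g'\rangle=\langle f'\circ f,g'\circ g\rangle$, $\langle f,g\rangle\star_2\langle g,h\rangle=\langle f,h\rangle$. *)

theory Defs
  imports Main
begin

text \<open>Letters of the free monoid M; words are lists, written left to right,
  so appending a letter c to a word v is v @ [c].\<close>
datatype mletter = lt | lr | ll

fun mrank :: "mletter \<Rightarrow> nat" where
  "mrank lt = 0" | "mrank lr = 1" | "mrank ll = 2"

fun lexless :: "mletter list \<Rightarrow> mletter list \<Rightarrow> bool" where
  "lexless (a # v) (b # w) = (mrank a < mrank b \<or> (a = b \<and> lexless v w))"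
| "lexless _ _ = False"

definition mless :: "mletter list \<Rightarrow> mletter list \<Rightarrow> bool" where
  "mless v w \<longleftrightarrow> length v < length w \<or> (length v = length w \<and> lexless v w)"

definition mle :: "mletter list \<Rightarrow> mletter list \<Rightarrow> bool" where
  "mle v w \<longleftrightarrow> v = w \<or> mless v w"

text \<open>Elements of M^n are lists of words of length n; product order.\<close>
definition vless :: "mletter list list \<Rightarrow> mletter list list \<Rightarrow> bool" where
  "vless x y \<longleftrightarrow> list_all2 mle x y \<and> x \<noteq> y"

text \<open>A 2-cell of Move on M^n (a strictly monotone map M^n -> M^n), represented
  canonically as a function on all lists that is the identity outside M^n.\<close>
definition move2 :: "nat \<Rightarrow> (mletter list list \<Rightarrow> mletter list list) \<Rightarrow> bool" where
  "move2 n f \<longleftrightarrow>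
     (\<forall>x. length x = n \<longrightarrow> length (f x) = n) \<and>
     (\<forall>x. length x \<noteq> n \<longrightarrow> f x = x) \<and>
     (\<forall>x y. length x = n \<longrightarrow> length y = n \<longrightarrow> vless x y \<longrightarrow> vless (f x) (f y))"

text \<open>Cartesian product of 2-cells (the 0-composition of Move).\<close>
definition mprod :: "nat \<Rightarrow> nat \<Rightarrow> (mletter list list \<Rightarrow> mletter list list)
     \<Rightarrow> (mletter list list \<Rightarrow> mletter list list) \<Rightarrow> (mletter list list \<Rightarrow> mletter list list)" where
  "mprod n m f g = (\<lambda>x. if length x = n + m then f (take n x) @ g (drop n x) else x)"

definition less2 :: "nat \<Rightarrow> (mletter list list \<Rightarrow> mletter list list)
     \<Rightarrow> (mletter list list \<Rightarrow> mletter list list) \<Rightarrow> bool" where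
  "less2 n f g \<longleftrightarrow> (\<forall>x. length x = n \<longrightarrow> vless (f x) (g x))"

definition move3 :: "nat \<Rightarrow> (mletter list list \<Rightarrow> mletter list list) \<times>
     (mletter list list \<Rightarrow> mletter list list) \<Rightarrow> bool" where
  "move3 n p \<longleftrightarrow> move2 n (fst p) \<and> move2 n (snd p) \<and>
     (fst p = snd p \<or> less2 n (snd p) (fst p))"

section \<open>The free 3-category Toff, as terms modulo the strict 3-category axioms\<close>

datatype gen2 = Swp | Nt | Tf2 | Tf3

fun garity :: "gen2 \<Rightarrow> nat" where
  "garity Swp = 2" | "garity Nt = 1" | "garity Tf2 = 2" | "garity Tf3 = 3"

text \<open>2-cell terms: generators, identity on n wires, star_0, star_1 (diagrammatic).
  All 2-cells of Toff are endo-2-cells n => n; ar2 gives n.\<close>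
datatype tm2 = G gen2 | I nat | C0 tm2 tm2 | C1 tm2 tm2

fun ar2 :: "tm2 \<Rightarrow> nat" where
  "ar2 (G g) = garity g"
| "ar2 (I n) = n"
| "ar2 (C0 a b) = ar2 a + ar2 b"
| "ar2 (C1 a b) = ar2 a"

fun wt2 :: "tm2 \<Rightarrow> bool" where
  "wt2 (G g) = True"
| "wt2 (I n) = True"
| "wt2 (C0 a b) = (wt2 a \<and> wt2 b)"
| "wt2 (C1 a b) = (wt2 a \<and> wt2 b \<and> ar2 a = ar2 b)"

text \<open>Equality of 2-cells in the free strict 2-category (one 0-cell).\<close>
inductive eq2 :: "tm2 \<Rightarrow> tm2 \<Rightarrow> bool" where
  e2_refl: "wt2 a \<Longrightarrow> eq2 a a"
| e2_sym: "wt2 b \<Longrightarrow> wt2 a \<Longrightarrow> eq2 a b \<Longrightarrow> eq2 b a"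
| e2_trans: "wt2 a \<Longrightarrow> wt2 c \<Longrightarrow> eq2 a b \<Longrightarrow> eq2 b c \<Longrightarrow> eq2 a c"
| e2_C0: "wt2 (C0 a b) \<Longrightarrow> wt2 (C0 a' b') \<Longrightarrow> eq2 a a' \<Longrightarrow> eq2 b b' \<Longrightarrow> eq2 (C0 a b) (C0 a' b')"
| e2_C1: "wt2 (C1 a b) \<Longrightarrow> wt2 (C1 a' b') \<Longrightarrow> eq2 a a' \<Longrightarrow> eq2 b b' \<Longrightarrow> eq2 (C1 a b) (C1 a' b')"
| e2_C0_assoc: "wt2 (C0 (C0 a b) c) \<Longrightarrow> wt2 (C0 a (C0 b c)) \<Longrightarrow> eq2 (C0 (C0 a b) c) (C0 a (C0 b c))"
| e2_C0_unitl: "wt2 (C0 (I 0) a) \<Longrightarrow> wt2 a \<Longrightarrow> eq2 (C0 (I 0) a) a"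
| e2_C0_unitr: "wt2 (C0 a (I 0)) \<Longrightarrow> wt2 a \<Longrightarrow> eq2 (C0 a (I 0)) a"
| e2_C1_assoc: "wt2 (C1 (C1 a b) c) \<Longrightarrow> wt2 (C1 a (C1 b c)) \<Longrightarrow> eq2 (C1 (C1 a b) c) (C1 a (C1 b c))"
| e2_C1_unitl: "wt2 (C1 (I (ar2 a)) a) \<Longrightarrow> wt2 a \<Longrightarrow> eq2 (C1 (I (ar2 a)) a) a"
| e2_C1_unitr: "wt2 (C1 a (I (ar2 a))) \<Longrightarrow> wt2 a \<Longrightarrow> eq2 (C1 a (I (ar2 a))) a"
| e2_I_C0: "wt2 (C0 (I n) (I m)) \<Longrightarrow> wt2 (I (n + m)) \<Longrightarrow> eq2 (C0 (I n) (I m)) (I (n + m))"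
| e2_xchg: "wt2 (C1 (C0 a b) (C0 c d)) \<Longrightarrow> wt2 (C0 (C1 a c) (C1 b d)) \<Longrightarrow> ar2 a = ar2 c \<Longrightarrow> ar2 b = ar2 d \<Longrightarrow>
     eq2 (C1 (C0 a b) (C0 c d)) (C0 (C1 a c) (C1 b d))"

datatype gen3 = R1 | R2 | R3 | R4 | R5 | R6 | R7 | R8 | R9 | R10 | R11 | R12

definition sw :: tm2 where "sw = G Swp"
definition w1 :: tm2 where "w1 = I 1"
definition tL3 :: tm2 where "tL3 = C1 (C0 sw w1) (C0 w1 sw)"
definition tL4 :: tm2 where
  "tL4 = C1 (C1 (C0 (C0 sw w1) w1) (C0 (C0 w1 sw) w1)) (C0 (C0 w1 w1) sw)"
definition tL3' :: tm2 where "tL3' = C1 (C0 w1 sw) (C0 sw w1)"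
definition tL4' :: tm2 where
  "tL4' = C1 (C1 (C0 (C0 w1 w1) sw) (C0 (C0 w1 sw) w1)) (C0 (C0 sw w1) w1)"

fun src_gen :: "gen3 \<Rightarrow> tm2" where
  "src_gen R1 = C1 sw sw"
| "src_gen R2 = C1 (C1 (C0 sw w1) (C0 w1 sw)) (C0 sw w1)"
| "src_gen R3 = C1 (G Nt) (G Nt)"
| "src_gen R4 = C1 (G Tf2) (G Tf2)"
| "src_gen R5 = C1 (G Tf3) (G Tf3)"
| "src_gen R6 = C1 sw (C0 (G Nt) w1)"
| "src_gen R7 = C1 sw (C0 w1 (G Nt))"
| "src_gen R8 = C1 tL3 (C0 (G Tf2) w1)"
| "src_gen R9 = C1 tL3' (C0 w1 (G Tf2))"
| "src_gen R10 = C1 tL4 (C0 (G Tf3) w1)"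
| "src_gen R11 = C1 tL4' (C0 w1 (G Tf3))"
| "src_gen R12 = C1 (C0 sw w1) (G Tf3)"

fun tgt_gen :: "gen3 \<Rightarrow> tm2" where
  "tgt_gen R1 = I 2"
| "tgt_gen R2 = C1 (C1 (C0 w1 sw) (C0 sw w1)) (C0 w1 sw)"
| "tgt_gen R3 = I 1"
| "tgt_gen R4 = I 2"
| "tgt_gen R5 = I 3"
| "tgt_gen R6 = C1 (C0 w1 (G Nt)) sw"
| "tgt_gen R7 = C1 (C0 (G Nt) w1) sw"
| "tgt_gen R8 = C1 (C0 w1 (G Tf2)) tL3"
| "tgt_gen R9 = C1 (C0 (G Tf2) w1) tL3'"
| "tgt_gen R10 = C1 (C0 w1 (G Tf3)) tL4"
| "tgt_gen R11 = C1 (C0 (G Tf3) w1) tL4'"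
| "tgt_gen R12 = C1 (G Tf3) (C0 sw w1)"

datatype tm3 = H gen3 | J tm2 | D0 tm3 tm3 | D1 tm3 tm3 | D2 tm3 tm3

fun src3 :: "tm3 \<Rightarrow> tm2" where
  "src3 (H r) = src_gen r"
| "src3 (J a) = a"
| "src3 (D0 x y) = C0 (src3 x) (src3 y)"
| "src3 (D1 x y) = C1 (src3 x) (src3 y)"
| "src3 (D2 x y) = src3 x"

fun tgt3 :: "tm3 \<Rightarrow> tm2" where
  "tgt3 (H r) = tgt_gen r"
| "tgt3 (J a) = a"
| "tgt3 (D0 x y) = C0 (tgt3 x) (tgt3 y)"
| "tgt3 (D1 x y) = C1 (tgt3 x) (tgt3 y)"
| "tgt3 (D2 x y) = tgt3 y"

definition ar3 :: "tm3 \<Rightarrow> nat" where "ar3 x = ar2 (src3 x)"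

fun wt3 :: "tm3 \<Rightarrow> bool" where
  "wt3 (H r) = True"
| "wt3 (J a) = wt2 a"
| "wt3 (D0 x y) = (wt3 x \<and> wt3 y)"
| "wt3 (D1 x y) = (wt3 x \<and> wt3 y \<and> ar3 x = ar3 y)"
| "wt3 (D2 x y) = (wt3 x \<and> wt3 y \<and> eq2 (tgt3 x) (src3 y))"

inductive eq3 :: "tm3 \<Rightarrow> tm3 \<Rightarrow> bool" where
  e3_refl: "wt3 x \<Longrightarrow> eq3 x x"
| e3_sym: "wt3 y \<Longrightarrow> wt3 x \<Longrightarrow> eq3 x y \<Longrightarrow> eq3 y x"
| e3_trans: "wt3 x \<Longrightarrow> wt3 z \<Longrightarrow> eq3 x y \<Longrightarrow> eq3 y z \<Longrightarrow> eq3 x z"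
| e3_D0: "wt3 (D0 x y) \<Longrightarrow> wt3 (D0 x' y') \<Longrightarrow> eq3 x x' \<Longrightarrow> eq3 y y' \<Longrightarrow> eq3 (D0 x y) (D0 x' y')"
| e3_D1: "wt3 (D1 x y) \<Longrightarrow> wt3 (D1 x' y') \<Longrightarrow> eq3 x x' \<Longrightarrow> eq3 y y' \<Longrightarrow> eq3 (D1 x y) (D1 x' y')"
| e3_D2: "wt3 (D2 x y) \<Longrightarrow> wt3 (D2 x' y') \<Longrightarrow> eq3 x x' \<Longrightarrow> eq3 y y' \<Longrightarrow> eq3 (D2 x y) (D2 x' y')"
| e3_J: "wt3 (J a) \<Longrightarrow> wt3 (J b) \<Longrightarrow> eq2 a b \<Longrightarrow> eq3 (J a) (J b)"
| e3_J_C0: "wt3 (J (C0 a b)) \<Longrightarrow> wt3 (D0 (J a) (J b)) \<Longrightarrow> eq3 (J (C0 a b)) (D0 (J a) (J b))"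
| e3_J_C1: "wt3 (J (C1 a b)) \<Longrightarrow> wt3 (D1 (J a) (J b)) \<Longrightarrow> eq3 (J (C1 a b)) (D1 (J a) (J b))"
| e3_D0_assoc: "wt3 (D0 (D0 x y) z) \<Longrightarrow> wt3 (D0 x (D0 y z)) \<Longrightarrow> eq3 (D0 (D0 x y) z) (D0 x (D0 y z))"
| e3_D0_unitl: "wt3 (D0 (J (I 0)) x) \<Longrightarrow> wt3 x \<Longrightarrow> eq3 (D0 (J (I 0)) x) x"
| e3_D0_unitr: "wt3 (D0 x (J (I 0))) \<Longrightarrow> wt3 x \<Longrightarrow> eq3 (D0 x (J (I 0))) x"
| e3_D1_assoc: "wt3 (D1 (D1 x y) z) \<Longrightarrow> wt3 (D1 x (D1 y z)) \<Longrightarrow> eq3 (D1 (D1 x y) z) (D1 x (D1 y z))"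
| e3_D1_unitl: "wt3 (D1 (J (I (ar3 x))) x) \<Longrightarrow> wt3 x \<Longrightarrow> eq3 (D1 (J (I (ar3 x))) x) x"
| e3_D1_unitr: "wt3 (D1 x (J (I (ar3 x)))) \<Longrightarrow> wt3 x \<Longrightarrow> eq3 (D1 x (J (I (ar3 x)))) x"
| e3_D2_assoc: "wt3 (D2 (D2 x y) z) \<Longrightarrow> wt3 (D2 x (D2 y z)) \<Longrightarrow> eq3 (D2 (D2 x y) z) (D2 x (D2 y z))"
| e3_D2_unitl: "wt3 (D2 (J (src3 x)) x) \<Longrightarrow> wt3 x \<Longrightarrow> eq3 (D2 (J (src3 x)) x) x"
| e3_D2_unitr: "wt3 (D2 x (J (tgt3 x))) \<Longrightarrow> wt3 x \<Longrightarrow> eq3 (D2 x (J (tgt3 x))) x"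
| e3_xchg01: "wt3 (D1 (D0 x y) (D0 x' y')) \<Longrightarrow> wt3 (D0 (D1 x x') (D1 y y')) \<Longrightarrow> ar3 x = ar3 x' \<Longrightarrow> ar3 y = ar3 y' \<Longrightarrow>
     eq3 (D1 (D0 x y) (D0 x' y')) (D0 (D1 x x') (D1 y y'))"
| e3_xchg02: "wt3 (D2 (D0 x y) (D0 x' y')) \<Longrightarrow> wt3 (D0 (D2 x x') (D2 y y')) \<Longrightarrow> eq2 (tgt3 x) (src3 x') \<Longrightarrow> eq2 (tgt3 y) (src3 y') \<Longrightarrow>
     eq3 (D2 (D0 x y) (D0 x' y')) (D0 (D2 x x') (D2 y y'))"
| e3_xchg12: "wt3 (D2 (D1 x y) (D1 x' y')) \<Longrightarrow> wt3 (D1 (D2 x x') (D2 y y')) \<Longrightarrow> ar3 x = ar3 y \<Longrightarrow> eq2 (tgt3 x) (src3 x') \<Longrightarrow> eq2 (tgt3 y) (src3 y') \<Longrightarrow>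
     eq3 (D2 (D1 x y) (D1 x' y')) (D1 (D2 x x') (D2 y y'))"

type_synonym mcell2 = "mletter list list \<Rightarrow> mletter list list"

text \<open>A 3-functor from Toff to Move sending the 1-cell n (n wires) to M^n:
  a map on 2-cell and 3-cell terms which lands in Move, preserves sources, targets,
  identities and all compositions, and respects the equalities of Toff.\<close>
definition is_3functor :: "(tm2 \<Rightarrow> mcell2) \<Rightarrow> (tm3 \<Rightarrow> mcell2 \<times> mcell2) \<Rightarrow> bool" where
  "is_3functor F2 F3 \<longleftrightarrow>
     (\<forall>a. wt2 a \<longrightarrow> move2 (ar2 a) (F2 a)) \<and>
     (\<forall>n. F2 (I n) = id) \<and>
     (\<forall>a b. wt2 (C0 a b) \<longrightarrow> F2 (C0 a b) = mprod (ar2 a) (ar2 b) (F2 a) (F2 b)) \<and>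
     (\<forall>a b. wt2 (C1 a b) \<longrightarrow> F2 (C1 a b) = F2 b \<circ> F2 a) \<and>
     (\<forall>a b. wt2 a \<longrightarrow> wt2 b \<longrightarrow> eq2 a b \<longrightarrow> F2 a = F2 b) \<and>
     (\<forall>x. wt3 x \<longrightarrow> move3 (ar3 x) (F3 x)) \<and>
     (\<forall>x. wt3 x \<longrightarrow> fst (F3 x) = F2 (src3 x) \<and> snd (F3 x) = F2 (tgt3 x)) \<and>
     (\<forall>a. wt2 a \<longrightarrow> F3 (J a) = (F2 a, F2 a)) \<and>
     (\<forall>x y. wt3 (D0 x y) \<longrightarrow> F3 (D0 x y) =
        (mprod (ar3 x) (ar3 y) (fst (F3 x)) (fst (F3 y)),
         mprod (ar3 x) (ar3 y) (snd (F3 x)) (snd (F3 y)))) \<and>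
     (\<forall>x y. wt3 (D1 x y) \<longrightarrow> F3 (D1 x y) =
        (fst (F3 y) \<circ> fst (F3 x), snd (F3 y) \<circ> snd (F3 x))) \<and>
     (\<forall>x y. wt3 (D2 x y) \<longrightarrow> F3 (D2 x y) = (fst (F3 x), snd (F3 y))) \<and>
     (\<forall>x y. wt3 x \<longrightarrow> wt3 y \<longrightarrow> eq3 x y \<longrightarrow> F3 x = F3 y)"

fun phiG :: "gen2 \<Rightarrow> mcell2" where
  "phiG Swp = (\<lambda>x. if length x = 2 then [x ! 1 @ [ll], x ! 0 @ [lr]] else x)"
| "phiG Nt = (\<lambda>x. if length x = 1 then [x ! 0 @ [lt]] else x)"
| "phiG Tf2 = (\<lambda>x. if length x = 2 then [x ! 0 @ [lt], x ! 1 @ [lt]] else x)"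
| "phiG Tf3 = (\<lambda>x. if length x = 3 then [x ! 0 @ [lt], x ! 1 @ [lt], x ! 2 @ [lt]] else x)"

definition extends_phi :: "(tm2 \<Rightarrow> mcell2) \<Rightarrow> (tm3 \<Rightarrow> mcell2 \<times> mcell2) \<Rightarrow> bool" where
  "extends_phi F2 F3 \<longleftrightarrow> is_3functor F2 F3 \<and>
     (\<forall>g. F2 (G g) = phiG g) \<and>
     (\<forall>r. F3 (H r) = (F2 (src_gen r), F2 (tgt_gen r)))"

end

theory Submission
  imports Defs
begin

text \<open>On 2-cells the functor is forced by the generators and the two compositions; it is
  well defined because Move satisfies the axioms of a strict 2-category and the images of the
  generators are strictly monotone. On 3-cells it is forced as well: a 3-cell x must go to
  \<open>\<langle>\<phi>(s x), \<phi>(t x)\<rangle>\<close>, so what has to be shown is that this pair is a 3-cell of Move,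
  i.e. \<open>\<phi>(t x) \<le>\<^sub>2 \<phi>(s x)\<close>. For the twelve generators this is a computation: both sides append
  letters to the input words, and the appended suffixes of the source are longer (for the
  involution relations) or lexicographically larger than those of the target. The relation
  \<open>\<ge>\<^sub>2\<close> is transitive and closed under products and under composition with strictly monotone
  maps, so it propagates from the generators to all 3-cells.\<close>

lemma lexless_irrefl [simp]: "\<not> lexless v v"
  by (induction v) auto

lemma lexless_trans: "lexless u v \<Longrightarrow> lexless v w \<Longrightarrow> lexless u w"
proof (induction u arbitrary: v w)
  case (Cons a u)
  then show ?case by (cases v; cases w) auto
qed simp

lemma lexless_append: "lexless v w \<Longrightarrow> lexless (v @ p) (w @ q)"
  by (induction v arbitrary: w) (auto elim: lexless.elims)

lemma lexless_append_left [simp]: "lexless (u @ v) (u @ w) \<longleftrightarrow> lexless v w"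
  by (induction u) auto

lemma mless_trans: "mless u v \<Longrightarrow> mless v w \<Longrightarrow> mless u w"
  unfolding mless_def using lexless_trans by auto

lemma mle_trans: "mle u v \<Longrightarrow> mle v w \<Longrightarrow> mle u w"
  unfolding mle_def using mless_trans by blast

lemma mle_antisym: "mle u v \<Longrightarrow> mle v u \<Longrightarrow> u = v"
  unfolding mle_def mless_def using lexless_trans by fastforce

lemma mle_append: "mle v w \<Longrightarrow> mle (v @ u) (w @ u)"
  unfolding mle_def mless_def using lexless_append by auto

abbreviation vle :: "mletter list list \<Rightarrow> mletter list list \<Rightarrow> bool" where
  "vle \<equiv> list_all2 mle"

lemma vle_refl: "vle x x"
  by (simp add: list_all2_refl mle_def)

lemma vle_trans: "vle x y \<Longrightarrow> vle y z \<Longrightarrow> vle x z"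
  using list_all2_trans mle_trans by blast

lemma vle_antisym: "vle x y \<Longrightarrow> vle y x \<Longrightarrow> x = y"
  by (induction x arbitrary: y) (auto simp: list_all2_Cons1 intro: mle_antisym)

lemma vless_vle_trans: "vless x y \<Longrightarrow> vle y z \<Longrightarrow> vless x z"
  unfolding vless_def using vle_trans vle_antisym by blast

lemma vle_vless_trans: "vle x y \<Longrightarrow> vless y z \<Longrightarrow> vless x z"
  unfolding vless_def using vle_trans vle_antisym by blast

lemma vless_trans: "vless x y \<Longrightarrow> vless y z \<Longrightarrow> vless x z"
  using vless_vle_trans vless_def by blast

lemma vless_append:
  assumes "vle x y" and "vle x' y'" and "vless x y \<or> vless x' y'"
  shows "vless (x @ x') (y @ y')"
proof -
  have "length x = length y" using assms(1) by (rule list_all2_lengthD)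
  then show ?thesis using assms by (auto simp: vless_def list_all2_appendI)
qed

lemma move2_length: "move2 n f \<Longrightarrow> length x = n \<Longrightarrow> length (f x) = n"
  unfolding move2_def by simp

lemma move2_strict_mono:
  "move2 n f \<Longrightarrow> length x = n \<Longrightarrow> length y = n \<Longrightarrow> vless x y \<Longrightarrow> vless (f x) (f y)"
  unfolding move2_def by simp

lemma move2_mono:
  "move2 n f \<Longrightarrow> length x = n \<Longrightarrow> length y = n \<Longrightarrow> vle x y \<Longrightarrow> vle (f x) (f y)"
  unfolding move2_def vless_def by (metis vle_refl)

lemma move2_id: "move2 n id"
  by (simp add: move2_def)

lemma move2_comp: "move2 n f \<Longrightarrow> move2 n g \<Longrightarrow> move2 n (g \<circ> f)"
  unfolding move2_def by auto

lemma move2_mprod: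
  assumes f: "move2 n f" and g: "move2 m g"
  shows "move2 (n + m) (mprod n m f g)"
  unfolding move2_def
proof (intro conjI allI impI)
  fix x y :: "mletter list list"
  assume x: "length x = n + m" and y: "length y = n + m" and "vless x y"
  then have "vle (take n x) (take n y)" "vle (drop n x) (drop n y)"
    and "vless (take n x) (take n y) \<or> vless (drop n x) (drop n y)"
    by (auto simp: vless_def list_all2_takeI list_all2_dropI) (metis append_take_drop_id)
  with x y show "vless (mprod n m f g x) (mprod n m f g y)"
    unfolding mprod_def
    by (auto intro!: vless_append move2_mono[OF f] move2_mono[OF g]
        dest: move2_strict_mono[OF f, rotated 2] move2_strict_mono[OF g, rotated 2])
qed (auto simp: mprod_def move2_length[OF f] move2_length[OF g])

lemma move2_phiG: "move2 (garity g) (phiG g)"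
  by (cases g) (auto simp: move2_def vless_def length_Suc_conv numeral_eq_Suc intro: mle_append)

fun phi2 :: "tm2 \<Rightarrow> mcell2" where
  "phi2 (G g) = phiG g"
| "phi2 (I n) = id"
| "phi2 (C0 a b) = mprod (ar2 a) (ar2 b) (phi2 a) (phi2 b)"
| "phi2 (C1 a b) = phi2 b \<circ> phi2 a"

lemma move2_phi2: "wt2 a \<Longrightarrow> move2 (ar2 a) (phi2 a)"
  by (induction a) (auto intro: move2_phiG move2_id move2_comp move2_mprod)

lemma mprod_assoc: "mprod (n + m) k (mprod n m f g) h = mprod n (m + k) f (mprod m k g h)"
  by (rule ext) (simp add: mprod_def take_add drop_take add.assoc add.commute[of m n])

lemma mprod_id_left: "move2 n f \<Longrightarrow> mprod 0 n id f = f"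
  by (rule ext) (auto simp: mprod_def move2_def)

lemma mprod_id_right: "move2 n f \<Longrightarrow> mprod n 0 f id = f"
  by (rule ext) (auto simp: mprod_def move2_def)

lemma mprod_id: "mprod n m id id = id"
  by (rule ext) (simp add: mprod_def)

lemma mprod_interchange:
  "move2 n f \<Longrightarrow> move2 m g \<Longrightarrow> mprod n m f' g' \<circ> mprod n m f g = mprod n m (f' \<circ> f) (g' \<circ> g)"
  by (rule ext) (auto simp: mprod_def move2_def)

lemma eq2_ar2: "eq2 a b \<Longrightarrow> ar2 a = ar2 b"
  by (induction rule: eq2.induct) auto

lemma eq2_phi2: "eq2 a b \<Longrightarrow> phi2 a = phi2 b"
proof (induction rule: eq2.induct)
  case (e2_C0 a b a' b')
  then show ?case using eq2_ar2 by auto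
next
  case (e2_C0_unitl a)
  then show ?case by (simp add: mprod_id_left move2_phi2)
next
  case (e2_C0_unitr a)
  then show ?case by (simp add: mprod_id_right move2_phi2)
next
  case (e2_xchg a b c d)
  then show ?case
    using mprod_interchange[OF move2_phi2[of a] move2_phi2[of b], of "phi2 c" "phi2 d"] by simp
qed (simp_all add: comp_assoc mprod_assoc mprod_id)

lemmas wire_defs = sw_def w1_def tL3_def tL4_def tL3'_def tL4'_def

lemma wt3_src_tgt:
  assumes "wt3 x"
  shows "wt2 (src3 x)" and "wt2 (tgt3 x)" and "ar2 (tgt3 x) = ar3 x"
proof -
  have "wt2 (src3 x) \<and> wt2 (tgt3 x) \<and> ar2 (tgt3 x) = ar2 (src3 x)"
    using assms
  proof (induction x)
    case (H r)
    then show ?case by (cases r) (simp_all add: wire_defs)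
  next
    case (D2 x y)
    then show ?case using eq2_ar2 by auto
  qed (auto simp: ar3_def)
  then show "wt2 (src3 x)" "wt2 (tgt3 x)" "ar2 (tgt3 x) = ar3 x"
    by (simp_all add: ar3_def)
qed

lemma move2_phi2_src3_tgt3:
  assumes "wt3 x"
  shows "move2 (ar3 x) (phi2 (src3 x))" and "move2 (ar3 x) (phi2 (tgt3 x))"
  using move2_phi2 wt3_src_tgt[OF assms] by (metis ar3_def)+

lemma eq3_src_tgt: "eq3 x y \<Longrightarrow> eq2 (src3 x) (src3 y) \<and> eq2 (tgt3 x) (tgt3 y)"
proof (induction rule: eq3.induct)
  case (e3_D1_unitl x)
  then show ?case
    using e2_C1_unitl[of "src3 x"] e2_C1_unitl[of "tgt3 x"] by (simp add: wt3_src_tgt ar3_def)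
next
  case (e3_D1_unitr x)
  then show ?case
    using e2_C1_unitr[of "src3 x"] e2_C1_unitr[of "tgt3 x"] by (simp add: wt3_src_tgt ar3_def)
qed (auto simp: ar3_def wt3_src_tgt intro: eq2.intros)

lemma all_length_Suc_conv:
  "(\<forall>x. length x = Suc n \<longrightarrow> P x) \<longleftrightarrow> (\<forall>a x. length x = n \<longrightarrow> P (a # x))"
  by (metis length_Suc_conv)

lemma phi2_src_gen_greater: "less2 (ar2 (src_gen r)) (phi2 (tgt_gen r)) (phi2 (src_gen r))"
  by (cases r)
    (simp_all add: less2_def all_length_Suc_conv numeral_eq_Suc wire_defs mprod_def
      vless_def mle_def mless_def)

text \<open>The paper's \<open>f \<ge>\<^sub>2 g\<close>, so that \<open>move3 n (f, g)\<close> is \<open>move2 n f \<and> move2 n g \<and> ge2 n f g\<close>.\<close>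

definition ge2 :: "nat \<Rightarrow> mcell2 \<Rightarrow> mcell2 \<Rightarrow> bool" where
  "ge2 n f g \<longleftrightarrow> f = g \<or> less2 n g f"

lemma ge2_vle: "ge2 n f g \<Longrightarrow> length x = n \<Longrightarrow> vle (g x) (f x)"
  unfolding ge2_def less2_def vless_def using vle_refl by metis

lemma ge2_vless: "ge2 n f g \<Longrightarrow> f \<noteq> g \<Longrightarrow> length x = n \<Longrightarrow> vless (g x) (f x)"
  unfolding ge2_def less2_def by simp

lemma ge2_trans: "ge2 n f g \<Longrightarrow> ge2 n g h \<Longrightarrow> ge2 n f h"
  unfolding ge2_def less2_def using vless_trans by metis

lemma ge2_mprod:
  assumes "ge2 n f g" and "ge2 m f' g'"
  shows "ge2 (n + m) (mprod n m f f') (mprod n m g g')"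
proof (cases "f = g \<and> f' = g'")
  case False
  have "vless (g (take n x) @ g' (drop n x)) (f (take n x) @ f' (drop n x))"
    if "length x = n + m" for x
  proof -
    have l: "length (take n x) = n" "length (drop n x) = m"
      using that by simp_all
    show ?thesis
      using vless_append[OF ge2_vle[OF assms(1) l(1)] ge2_vle[OF assms(2) l(2)]] False
        ge2_vless[OF assms(1) _ l(1)] ge2_vless[OF assms(2) _ l(2)] by blast
  qed
  then show ?thesis by (simp add: ge2_def less2_def mprod_def)
qed (simp add: ge2_def)

lemma ge2_comp:
  assumes f: "move2 n f" and g: "move2 n g" and g': "move2 n g'"
    and "ge2 n f g" and "ge2 n f' g'"
  shows "ge2 n (f' \<circ> f) (g' \<circ> g)"
proof (cases "f = g \<and> f' = g'")
  case False
  have "vless (g' (g x)) (f' (f x))" if x: "length x = n" for x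
  proof -
    have fx: "length (f x) = n" and gx: "length (g x) = n"
      using x f g by (simp_all add: move2_length)
    have le: "vle (g' (g x)) (g' (f x))" "vle (g' (f x)) (f' (f x))"
      using move2_mono[OF g' gx fx] ge2_vle assms(4,5) x fx by auto
    show ?thesis
    proof (cases "f = g")
      case True
      with False have "vless (g' (f x)) (f' (f x))" using ge2_vless assms(5) fx by blast
      then show ?thesis using le(1) vle_vless_trans by blast
    next
      case False
      then have "vless (g' (g x)) (g' (f x))"
        using move2_strict_mono[OF g' gx fx] ge2_vless assms(4) x by blast
      then show ?thesis using le(2) vless_vle_trans by blast
    qed
  qed
  then show ?thesis by (simp add: ge2_def less2_def)
qed (simp add: ge2_def)

lemma phi2_src3_ge2: "wt3 x \<Longrightarrow> ge2 (ar3 x) (phi2 (src3 x)) (phi2 (tgt3 x))"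
proof (induction x)
  case (H r)
  then show ?case using phi2_src_gen_greater[of r] by (simp add: ge2_def ar3_def)
next
  case (J a)
  then show ?case by (simp add: ge2_def)
next
  case (D0 x y)
  then show ?case using ge2_mprod[of "ar3 x" _ _ "ar3 y"] wt3_src_tgt by (simp add: ar3_def)
next
  case (D1 x y)
  then have "wt3 x" "wt3 y" "ar3 y = ar3 x" by simp_all
  then have "ge2 (ar3 x) (phi2 (src3 y) \<circ> phi2 (src3 x)) (phi2 (tgt3 y) \<circ> phi2 (tgt3 x))"
    using D1.IH move2_phi2_src3_tgt3 by (intro ge2_comp) metis+
  then show ?case by (simp add: ar3_def comp_def)
next
  case (D2 x y)
  then have x: "wt3 x" and y: "wt3 y" and xy: "eq2 (tgt3 x) (src3 y)" by simp_all
  then have "ar3 y = ar3 x"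
    using eq2_ar2[OF xy] wt3_src_tgt(3)[OF x] by (simp add: ar3_def)
  then show ?case
    using D2.IH x y eq2_phi2[OF xy] ge2_trans by (simp add: ar3_def)
qed

definition phi3 :: "tm3 \<Rightarrow> mcell2 \<times> mcell2" where
  "phi3 x = (phi2 (src3 x), phi2 (tgt3 x))"

lemma extends_phi_phi2_phi3: "extends_phi phi2 phi3"
  unfolding extends_phi_def is_3functor_def
proof (intro conjI allI impI)
  fix x assume "wt3 x"
  then show "move3 (ar3 x) (phi3 x)"
    using move2_phi2_src3_tgt3 phi2_src3_ge2 by (simp add: move3_def phi3_def ge2_def)
next
  fix x y assume "wt3 (D0 x y)"
  then show "phi3 (D0 x y) = (mprod (ar3 x) (ar3 y) (fst (phi3 x)) (fst (phi3 y)),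
      mprod (ar3 x) (ar3 y) (snd (phi3 x)) (snd (phi3 y)))"
    using wt3_src_tgt(3)[of x] wt3_src_tgt(3)[of y] by (simp add: phi3_def ar3_def)
next
  fix x y assume "eq3 x y"
  then show "phi3 x = phi3 y"
    using eq3_src_tgt eq2_phi2 by (simp add: phi3_def)
qed (simp_all add: phi3_def move2_phi2 eq2_phi2)

lemma extends_phi_unique:
  assumes "extends_phi F2 F3"
  shows "wt2 a \<Longrightarrow> F2 a = phi2 a" and "wt3 x \<Longrightarrow> F3 x = phi3 x"
proof -
  have F2: "F2 a = phi2 a" if "wt2 a" for a
    using that assms by (induction a) (auto simp: extends_phi_def is_3functor_def)
  then show "wt2 a \<Longrightarrow> F2 a = phi2 a" .
  assume "wt3 x"
  then show "F3 x = phi3 x"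
    using assms F2 wt3_src_tgt by (simp add: extends_phi_def is_3functor_def phi3_def prod_eq_iff)
qed

theorem mainTheorem4:
  shows "\<exists>F2 F3. extends_phi F2 F3 \<and>
           (\<forall>F2' F3'. extends_phi F2' F3' \<longrightarrow>
              (\<forall>a. wt2 a \<longrightarrow> F2' a = F2 a) \<and> (\<forall>x. wt3 x \<longrightarrow> F3' x = F3 x))"
  using extends_phi_phi2_phi3 extends_phi_unique by blast

end
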